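(* Let $G$ be a graph with $\mathrm{diam}(G)=3$ such that $D_2(G)$ is connected. Then $2\leqslant \mathrm{diam}(D_2(G))\leqslant 5$. Moreover, both inequalities are sharp: there exist graphs $G$ with $\mathrm{diam}(G)=3$, $D_2(G)$ connected and $\mathrm{diam}(D_2(G))=2$, and there exist graphs $G$ with $\mathrm{diam}(G)=3$, $D_2(G)$ connected and $\mathrm{diam}(D_2(G))=5$.
   Context: All graphs are finite, simple and undirected. For a graph $G$, $\mathrm{d}_G(x,y)$ denotes the length of a shortest path between $x$ and $y$, and $\mathrm{diam}(G)$ is the maximum distance between vertices of $G$. The $2$-distance graph $D_2(G)$ of $G$ is the graph with vertex set $V(G)$ in which two vertices $x,y$ are adjacent if and only if $\mathrm{d}_G(x,y)=2$. *)

theory Defs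
  imports Main "HOL-Library.Extended_Nat"
begin

definition simple_graph :: "'a set \<Rightarrow> ('a \<Rightarrow> 'a \<Rightarrow> bool) \<Rightarrow> bool" where
  "simple_graph V E \<longleftrightarrow> finite V \<and> (\<forall>x y. E x y \<longrightarrow> x \<in> V \<and> y \<in> V)
     \<and> (\<forall>x. \<not> E x x) \<and> (\<forall>x y. E x y \<longrightarrow> E y x)"

definition is_walk :: "'a set \<Rightarrow> ('a \<Rightarrow> 'a \<Rightarrow> bool) \<Rightarrow> 'a list \<Rightarrow> 'a \<Rightarrow> 'a \<Rightarrow> bool" where
  "is_walk V E p x y \<longleftrightarrow> p \<noteq> [] \<and> hd p = x \<and> last p = y \<and> set p \<subseteq> V
     \<and> (\<forall>i. Suc i < length p \<longrightarrow> E (p ! i) (p ! Suc i))"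

definition gdist :: "'a set \<Rightarrow> ('a \<Rightarrow> 'a \<Rightarrow> bool) \<Rightarrow> 'a \<Rightarrow> 'a \<Rightarrow> enat" where
  "gdist V E x y = (INF p \<in> {p. is_walk V E p x y}. enat (length p - 1))"

definition gdiam :: "'a set \<Rightarrow> ('a \<Rightarrow> 'a \<Rightarrow> bool) \<Rightarrow> enat" where
  "gdiam V E = (SUP x \<in> V. SUP y \<in> V. gdist V E x y)"

definition gconnected :: "'a set \<Rightarrow> ('a \<Rightarrow> 'a \<Rightarrow> bool) \<Rightarrow> bool" where
  "gconnected V E \<longleftrightarrow> V \<noteq> {} \<and> (\<forall>x\<in>V. \<forall>y\<in>V. gdist V E x y \<noteq> \<infinity>)"

definition D2 :: "'a set \<Rightarrow> ('a \<Rightarrow> 'a \<Rightarrow> bool) \<Rightarrow> ('a \<Rightarrow> 'a \<Rightarrow> bool)" where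
  "D2 V E = (\<lambda>x y. x \<in> V \<and> y \<in> V \<and> gdist V E x y = 2)"

end

theory Submission
  imports Defs
begin

text \<open>Let \<open>G\<close> have diameter 3 and call two vertices far if their distance in \<open>D\<^sub>2(G)\<close> is at
  least 3; far vertices are at distance 1 or 3 in \<open>G\<close>. Following geodesics of \<open>G\<close> shows that
  three pairwise far vertices span no edge of \<open>G\<close>, hence are pairwise at distance 3, and that
  then any two of them are joined by a path of length 3 in \<open>D\<^sub>2(G)\<close>. If two vertices were at
  distance at least 6 in \<open>D\<^sub>2(G)\<close>, the vertices at positions 0, 3 and 6 of a shortest path
  between them would be pairwise far, which is impossible; so \<open>diam(D\<^sub>2(G)) \<le> 5\<close>. The lower
  bound holds because two vertices at distance 3 in \<open>G\<close> are neither equal nor adjacent in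
  \<open>D\<^sub>2(G)\<close>. For sharpness, the distances in the two example graphs are certified by
  breadth-first-search tables.\<close>

section \<open>Walks and distances\<close>

lemma is_walk_singleton [simp]: "is_walk V R [x] a b \<longleftrightarrow> x \<in> V \<and> a = x \<and> b = x"
  unfolding is_walk_def by auto

lemma is_walk_Cons_Cons [simp]:
  "is_walk V R (x # y # p) a b \<longleftrightarrow> a = x \<and> x \<in> V \<and> R x y \<and> is_walk V R (y # p) y b"
  unfolding is_walk_def by (auto simp: nth_Cons split: nat.splits)

lemma walk_append:
  "is_walk V R p x y \<Longrightarrow> is_walk V R q y z \<Longrightarrow> is_walk V R (p @ tl q) x z"
proof (induction p arbitrary: x rule: induct_list012)
  case 1
  then show ?case by (simp add: is_walk_def)
next
  case (2 a)
  then have "q = y # tl q"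
    unfolding is_walk_def by (metis list.collapse)
  with 2 show ?case by simp
next
  case (3 a b p)
  then show ?case by simp
qed

lemma walk_take:
  assumes "is_walk V R p x y" "k < length p"
  shows "is_walk V R (take (Suc k) p) x (p ! k)"
proof -
  have "last (take (Suc k) p) = p ! k"
    using assms(2) by (simp add: take_Suc_conv_app_nth)
  then show ?thesis
    using assms set_take_subset[of "Suc k" p] unfolding is_walk_def by auto
qed

lemma walk_drop:
  assumes "is_walk V R p x y" "k < length p"
  shows "is_walk V R (drop k p) (p ! k) y"
  using assms set_drop_subset[of k p] unfolding is_walk_def by (auto simp: hd_drop_conv_nth)

lemma walk_rev:
  assumes walk: "is_walk V R p x y" and sym: "\<And>u v. R u v \<Longrightarrow> R v u"
  shows "is_walk V R (rev p) y x"
  unfolding is_walk_def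
proof (intro conjI allI impI)
  fix i assume i: "Suc i < length (rev p)"
  define j where "j = length p - Suc (Suc i)"
  have "R (p ! j) (p ! Suc j)"
    using walk i unfolding is_walk_def j_def by auto
  moreover have "rev p ! i = p ! Suc j" "rev p ! Suc i = p ! j"
    using i by (simp_all add: rev_nth j_def Suc_diff_Suc)
  ultimately show "R (rev p ! i) (rev p ! Suc i)"
    using sym by simp
qed (use walk in \<open>auto simp: is_walk_def hd_rev last_rev\<close>)

lemma walk_Lipschitz:
  assumes "\<forall>u\<in>V. \<forall>v\<in>V. R u v \<longrightarrow> f v \<le> f u + 1"
  shows "is_walk V R p x y \<Longrightarrow> f y \<le> f x + (length p - 1)"
proof (induction p arbitrary: x rule: induct_list012)
  case (3 a b p)
  then have "f b \<le> f a + 1"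
    using assms by (auto simp: is_walk_def)
  moreover have "f y \<le> f b + length p"
    using "3.IH"(2)[of b] "3.prems" by simp
  ultimately show ?case
    using "3.prems" by simp
qed (auto simp: is_walk_def)

lemma gdist_le_walk: "is_walk V R p x y \<Longrightarrow> gdist V R x y \<le> enat (length p - 1)"
  unfolding gdist_def by (rule INF_lower2[of p]) auto

lemma gdist_refl: "x \<in> V \<Longrightarrow> gdist V R x x = 0"
  using gdist_le_walk[of V R "[x]" x x] by (simp add: zero_enat_def[symmetric])

lemma gdist_le_1: "x \<in> V \<Longrightarrow> y \<in> V \<Longrightarrow> R x y \<Longrightarrow> gdist V R x y \<le> 1"
  using gdist_le_walk[of V R "[x, y]" x y] by (simp add: one_enat_def)

lemma gdist_obtains_shortest_walk:
  assumes "gdist V R x y = enat n"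
  obtains p where "is_walk V R p x y" "length p = Suc n"
proof -
  let ?S = "(\<lambda>p. enat (length p - 1)) ` {p. is_walk V R p x y}"
  have "?S \<noteq> {}"
  proof
    assume "?S = {}"
    then show False
      using assms unfolding gdist_def by (simp add: top_enat_def)
  qed
  then have "Inf ?S \<in> ?S"
    unfolding Inf_enat_def by (auto intro: LeastI)
  then obtain p where "is_walk V R p x y" "enat (length p - 1) = enat n"
    using assms unfolding gdist_def by auto
  moreover from this have "p \<noteq> []"
    unfolding is_walk_def by auto
  ultimately show thesis
    using that[of p] by (cases p) auto
qed

lemma gdist_eq_0_imp_eq:
  assumes "gdist V R x y = 0"
  shows "x = y"
proof -
  obtain p where "is_walk V R p x y" "length p = Suc 0"
    using assms unfolding zero_enat_def by (rule gdist_obtains_shortest_walk)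
  then show ?thesis
    by (auto simp: length_Suc_conv)
qed

lemma gdist_eq_1_imp_adjacent:
  assumes "gdist V R x y = 1"
  shows "R x y"
proof -
  obtain p where "is_walk V R p x y" "length p = Suc 1"
    using assms unfolding one_enat_def by (rule gdist_obtains_shortest_walk)
  then show ?thesis
    by (auto simp: length_Suc_conv numeral_2_eq_2)
qed

lemma gdist_ge_2I: "x \<noteq> y \<Longrightarrow> \<not> R x y \<Longrightarrow> 2 \<le> gdist V R x y"
  using gdist_eq_0_imp_eq[of V R x y] gdist_eq_1_imp_adjacent[of V R x y]
  by (cases "gdist V R x y") (auto simp: numeral_eq_enat zero_enat_def one_enat_def, presburger)

lemma gdist_triangle: "gdist V R x z \<le> gdist V R x y + gdist V R y z"
proof (cases "gdist V R x y"; cases "gdist V R y z")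
  fix m n assume mn: "gdist V R x y = enat m" "gdist V R y z = enat n"
  obtain p where p: "is_walk V R p x y" "length p = Suc m"
    using mn(1) by (rule gdist_obtains_shortest_walk)
  obtain q where q: "is_walk V R q y z" "length q = Suc n"
    using mn(2) by (rule gdist_obtains_shortest_walk)
  have "gdist V R x z \<le> enat (length (p @ tl q) - 1)"
    using walk_append[OF p(1) q(1)] by (rule gdist_le_walk)
  then show ?thesis
    using p(2) q(2) mn by simp
qed auto

lemma gdist_sym:
  assumes "\<And>u v. R u v \<Longrightarrow> R v u"
  shows "gdist V R x y = gdist V R y x"
proof -
  have "gdist V R b a \<le> gdist V R a b" for a b
  proof (cases "gdist V R a b")
    case (enat n)
    then obtain p where "is_walk V R p a b" "length p = Suc n"
      by (rule gdist_obtains_shortest_walk)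
    then show ?thesis
      using gdist_le_walk[OF walk_rev[OF _ assms]] enat by fastforce
  qed simp
  from this[of x y] this[of y x] show ?thesis
    by (rule antisym)
qed

lemma gdist_split:
  assumes "gdist V R x y = enat n" "k \<le> n"
  obtains w where "w \<in> V" "gdist V R x w = enat k" "gdist V R w y = enat (n - k)"
proof -
  obtain p where p: "is_walk V R p x y" "length p = Suc n"
    using assms(1) by (rule gdist_obtains_shortest_walk)
  have k: "k < length p"
    using p(2) assms(2) by simp
  let ?w = "p ! k"
  have "gdist V R x ?w \<le> enat k"
    using gdist_le_walk[OF walk_take[OF p(1) k]] k by simp
  then obtain i where i: "gdist V R x ?w = enat i" "i \<le> k"
    by (metis enat_ile enat_ord_simps(1))
  have "gdist V R ?w y \<le> enat (n - k)"
    using gdist_le_walk[OF walk_drop[OF p(1) k]] p(2) by simp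
  then obtain j where j: "gdist V R ?w y = enat j" "j \<le> n - k"
    by (metis enat_ile enat_ord_simps(1))
  have "enat n \<le> gdist V R x ?w + gdist V R ?w y"
    using gdist_triangle[of V R x y ?w] assms(1) by simp
  then have "i = k" "j = n - k"
    using i j assms(2) by simp_all
  moreover have "?w \<in> V"
    using p(1) k unfolding is_walk_def by auto
  ultimately show thesis
    using that i j by simp
qed

lemma gdist_ge_3D:
  assumes "3 \<le> gdist V R a b" "a \<in> V" "b \<in> V"
  shows "a \<noteq> b" and "\<not> R a b" and "z \<in> V \<Longrightarrow> \<not> (R a z \<and> R z b)"
proof -
  have not_le: "\<not> gdist V R a b \<le> enat k" if "k < 3" for k
    using assms(1) that order_trans[of 3 "gdist V R a b" "enat k"] by (auto simp: numeral_eq_enat)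
  show "a \<noteq> b"
    using not_le[of 0] gdist_le_walk[of V R "[a]" a a] assms(2) by auto
  show "\<not> R a b"
    using not_le[of 1] gdist_le_walk[of V R "[a, b]" a b] assms(2,3) by auto
  show "\<not> (R a z \<and> R z b)" if "z \<in> V"
    using not_le[of 2] gdist_le_walk[of V R "[a, z, b]" a b] assms(2,3) that
    by (auto simp: numeral_2_eq_2)
qed

lemma gdist_le_gdiam: "x \<in> V \<Longrightarrow> y \<in> V \<Longrightarrow> gdist V R x y \<le> gdiam V R"
  unfolding gdiam_def by (meson SUP_upper2 SUP_upper)

lemma gdist_finite:
  "gdiam V R \<noteq> \<infinity> \<Longrightarrow> x \<in> V \<Longrightarrow> y \<in> V \<Longrightarrow> gdist V R x y \<noteq> \<infinity>"
  using gdist_le_gdiam[of x V y R] by (cases "gdiam V R"; cases "gdist V R x y") auto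

lemma gdiam_attained:
  assumes "gdiam V R = enat (Suc n)"
  obtains p q where "p \<in> V" "q \<in> V" "gdist V R p q = enat (Suc n)"
proof -
  have "\<exists>p\<in>V. \<exists>q\<in>V. gdist V R p q = enat (Suc n)"
  proof (rule ccontr)
    assume not_attained: "\<not> ?thesis"
    have "gdist V R p q \<le> enat n" if "p \<in> V" "q \<in> V" for p q
      using gdist_le_gdiam[OF that, of R] assms not_attained that
      by (cases "gdist V R p q") (fastforce simp: le_Suc_eq)+
    then have "gdiam V R \<le> enat n"
      unfolding gdiam_def by (blast intro: SUP_least)
    then show False
      using assms by simp
  qed
  then show thesis
    using that by blast
qed

section \<open>Graph metrics of diameter 3\<close>

text \<open>Abstracts the distance function of a connected graph of diameter 3, through the properties
  the argument uses; adjacency is distance 1.\<close>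

locale diam3_graph_metric =
  fixes V :: "'a set" and d :: "'a \<Rightarrow> 'a \<Rightarrow> nat"
  assumes dist_eq_0_iff: "x \<in> V \<Longrightarrow> y \<in> V \<Longrightarrow> d x y = 0 \<longleftrightarrow> x = y"
    and dist_commute: "x \<in> V \<Longrightarrow> y \<in> V \<Longrightarrow> d x y = d y x"
    and dist_triangle: "x \<in> V \<Longrightarrow> y \<in> V \<Longrightarrow> z \<in> V \<Longrightarrow> d x z \<le> d x y + d y z"
    and dist_geodesic: "x \<in> V \<Longrightarrow> y \<in> V \<Longrightarrow> d x y = Suc k \<Longrightarrow> \<exists>z\<in>V. d x z = 1 \<and> d z y = k"
    and dist_le_3: "x \<in> V \<Longrightarrow> y \<in> V \<Longrightarrow> d x y \<le> 3"
    and dist_eq_3_exists: "\<exists>p\<in>V. \<exists>q\<in>V. d p q = 3"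
begin

text \<open>\<open>far a b\<close> says that \<open>a\<close> and \<open>b\<close> are at distance at least 3 in \<open>D\<^sub>2(G)\<close>.\<close>

definition far :: "'a \<Rightarrow> 'a \<Rightarrow> bool" where
  "far a b \<longleftrightarrow> a \<noteq> b \<and> d a b \<noteq> 2 \<and> (\<forall>z\<in>V. d a z \<noteq> 2 \<or> d z b \<noteq> 2)"

lemma far_commute: "a \<in> V \<Longrightarrow> b \<in> V \<Longrightarrow> far a b \<Longrightarrow> far b a"
  unfolding far_def by (metis dist_commute)

lemma dist_eq_1_or_3: "a \<in> V \<Longrightarrow> b \<in> V \<Longrightarrow> a \<noteq> b \<Longrightarrow> d a b \<noteq> 2 \<Longrightarrow> d a b = 1 \<or> d a b = 3"
  using dist_le_3[of a b] dist_eq_0_iff[of a b] by linarith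

lemma far_dist_1_or_3: "a \<in> V \<Longrightarrow> b \<in> V \<Longrightarrow> far a b \<Longrightarrow> d a b = 1 \<or> d a b = 3"
  unfolding far_def using dist_eq_1_or_3 by blast

lemma dist_3_geodesic:
  assumes "x \<in> V" "y \<in> V" "d x y = 3"
  obtains a b where "a \<in> V" "b \<in> V" "d x a = 1" "d a b = 1" "d b y = 1" "d x b = 2" "d a y = 2"
proof -
  obtain a where a: "a \<in> V" "d x a = 1" "d a y = 2"
    using dist_geodesic[of x y 2] assms by auto
  obtain b where b: "b \<in> V" "d a b = 1" "d b y = 1"
    using dist_geodesic[of a y 1] a assms by auto
  have "d x b = 2"
    using dist_triangle[of x a b] dist_triangle[of x b y] assms a b by simp
  with a b show thesis
    using that by blast
qed

lemma far_edge_not_both_dist_3: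
  assumes V: "x \<in> V" "y \<in> V" "w \<in> V"
    and "d x y = 1" "far x y" "far w y" "d w x = 3"
  shows "d w y \<noteq> 3"
proof
  assume wy: "d w y = 3"
  obtain s t where st: "s \<in> V" "t \<in> V" "d w s = 1" "d s t = 1" "d t x = 1" "d w t = 2"
    "d s x = 2"
    using dist_3_geodesic[OF V(3,1) \<open>d w x = 3\<close>] by blast
  then have "d t y \<noteq> 2" "t \<noteq> y"
    using \<open>far w y\<close> wy unfolding far_def by auto
  moreover have "d t y \<le> 2"
    using dist_triangle[of t x y] assms st by simp
  ultimately have "d t y = 1"
    using dist_eq_0_iff[of t y] st V by linarith
  then have "d s y = 2"
    using dist_triangle[of s t y] dist_triangle[of w s y] wy st V by simp
  moreover have "d x s = 2"
    using dist_commute[of x s] V st by simp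
  ultimately show False
    using \<open>far x y\<close> st unfolding far_def by blast
qed

lemma far_triangle_D2_neighbour:
  assumes V: "x \<in> V" "y \<in> V" "w \<in> V" "t \<in> V"
    and "d x y = 1" "d w x = 1" "d w y = 1" "far x y" "far w x" "far w y"
    and "d w t = 2"
  shows "d t x = 1 \<and> d t y = 1"
proof -
  have "d t x \<noteq> 2" "d t y \<noteq> 2" "t \<noteq> x" "t \<noteq> y"
    using assms unfolding far_def by auto
  then have "d t x = 1 \<or> d t x = 3" "d t y = 1 \<or> d t y = 3"
    using dist_eq_1_or_3 V by auto
  moreover have "d t x \<le> d t y + 1" "d t y \<le> d t x + 1"
    using dist_triangle[of t x y] dist_triangle[of t y x] dist_commute[of x y] assms by auto
  moreover have "\<not> (d t x = 3 \<and> d t y = 3)"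
  proof
    assume far_t: "d t x = 3 \<and> d t y = 3"
    obtain s where s: "s \<in> V" "d w s = 1" "d s t = 1"
      using dist_geodesic[of w t 1] assms by auto
    have "d s t = d t s" "d s w = 1"
      using dist_commute s V by auto
    then have "d x s = 2" "d s y = 2"
      using dist_triangle[of s w x] dist_triangle[of t s x] dist_triangle[of s w y]
        dist_triangle[of t s y] dist_commute[of x s] far_t assms s by auto
    then show False
      using \<open>far x y\<close> s unfolding far_def by blast
  qed
  ultimately show ?thesis
    by auto
qed

lemma far_triangle_ecc:
  assumes V: "x \<in> V" "y \<in> V" "w \<in> V" "z \<in> V"
    and "d x y = 1" "d w x = 1" "d w y = 1" "far x y" "far w x" "far w y"
  shows "d w z \<le> 2"
proof (rule ccontr)
  assume "\<not> d w z \<le> 2"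
  then have wz: "d w z = 3"
    using dist_le_3[of w z] V by simp
  obtain t where t: "t \<in> V" "d t z = 1" "d w t = 2"
    using dist_3_geodesic[OF V(3,4) wz] by blast
  then have "d x t = 1" "d y t = 1"
    using far_triangle_D2_neighbour[OF V(1-3) t(1) assms(5-10)] dist_commute V by auto
  then have "d x z = 2" "d y z = 2"
    using dist_triangle[of x t z] dist_triangle[of w x z] dist_triangle[of y t z]
      dist_triangle[of w y z] assms t wz by auto
  then show False
    using \<open>far x y\<close> dist_commute[of y z] V unfolding far_def by auto
qed

lemma no_far_triangle:
  assumes V: "x \<in> V" "y \<in> V" "w \<in> V"
    and "d x y = 1" "d w x = 1" "d w y = 1" "far x y" "far w x" "far w y"
  shows False
proof -
  have D2_neighbour: "d t x = 1 \<and> d t y = 1" if "t \<in> V" "d w t = 2" for t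
    using far_triangle_D2_neighbour[OF V that(1) assms(4-9) that(2)] .
  have mixed: False if pq: "p \<in> V" "q \<in> V" "d q p = 3" "d w p \<le> 1" "d w q = 2" for p q
  proof -
    have "d q x = 1" "d q y = 1"
      using D2_neighbour pq by auto
    moreover have "d x w = 1" "d y w = 1"
      using dist_commute assms by auto
    ultimately have "d x p = 2" "d y p = 2"
      using dist_triangle[of x w p] dist_triangle[of q x p] dist_triangle[of y w p]
        dist_triangle[of q y p] assms pq by auto
    then show False
      using \<open>far x y\<close> pq dist_commute[of y p] V unfolding far_def by auto
  qed
  obtain p q where pq: "p \<in> V" "q \<in> V" "d p q = 3"
    using dist_eq_3_exists by blast
  have "d w p \<le> 2" "d w q \<le> 2"
    using far_triangle_ecc[OF V] assms pq by auto
  then consider "d w p = 2" "d w q = 2" | "d w p \<le> 1" "d w q \<le> 1"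
    | "d w p \<le> 1" "d w q = 2" | "d w p = 2" "d w q \<le> 1"
    by linarith
  then show False
  proof cases
    case 1
    then have "d p x = 1" "d x q = 1"
      using D2_neighbour pq dist_commute[of x q] V by auto
    then show False
      using dist_triangle[of p x q] pq V by simp
  next
    case 2
    then show False
      using dist_triangle[of p w q] dist_commute[of p w] pq V by simp
  next
    case 3
    then show False
      using mixed[of p q] dist_commute[of p q] pq by simp
  next
    case 4
    then show False
      using mixed[of q p] pq by simp
  qed
qed

lemma far_triple_dist_3:
  assumes V: "x \<in> V" "y \<in> V" "w \<in> V" and "far x y" "far w x" "far w y"
  shows "d x y = 3"
proof (rule ccontr)
  assume "d x y \<noteq> 3"
  then have xy: "d x y = 1"
    using far_dist_1_or_3 assms by blast
  have "d w x = 1 \<or> d w x = 3" "d w y = 1 \<or> d w y = 3"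
    using far_dist_1_or_3 assms by auto
  moreover have "d w x \<le> d w y + 1" "d w y \<le> d w x + 1"
    using dist_triangle[of w y x] dist_triangle[of w x y] dist_commute[of x y] xy V by auto
  ultimately consider "d w x = 1" "d w y = 1" | "d w x = 3" "d w y = 3"
    by linarith
  then show False
  proof cases
    case 1
    then show False
      using no_far_triangle[OF V xy _ _ assms(4-6)] by blast
  next
    case 2
    then show False
      using far_edge_not_both_dist_3[OF V xy assms(4,6)] by blast
  qed
qed

lemma far_triple_D2_path:
  assumes V: "x \<in> V" "y \<in> V" "z \<in> V" and "far x y" "far y z" "far x z"
  shows "\<exists>u\<in>V. \<exists>v\<in>V. d x u = 2 \<and> d u v = 2 \<and> d v z = 2"
proof -
  have far_rev: "far y x" "far z y" "far z x"
    using far_commute assms by auto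
  have xy: "d x y = 3" and xz: "d x z = 3" and yz: "d y z = 3"
    using far_triple_dist_3[of x y z] far_triple_dist_3[of x z y] far_triple_dist_3[of y z x]
      assms far_rev by auto
  obtain a b where ab: "a \<in> V" "b \<in> V" "d x a = 1" "d a b = 1" "d b y = 1" "d x b = 2" "d a y = 2"
    using dist_3_geodesic[OF V(1,2) xy] by blast
  have "d y a = 2" "d a x = 1"
    using ab dist_commute V by auto
  then have "z \<noteq> a" "d a z \<noteq> 2" "d x z \<le> 1 + d a z"
    using ab xz \<open>far y z\<close> dist_triangle[of x a z] V unfolding far_def by auto
  then have za: "d z a = 3"
    using dist_eq_1_or_3[of z a] dist_commute[of z a] ab xz V by auto
  obtain k where k: "k \<in> V" "d k a = 1" "d z k = 2"
    using dist_3_geodesic[OF V(3) ab(1) za] by blast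
  then have kz: "d k z = 2"
    using dist_commute V by auto
  have "k \<noteq> x" "d x k \<noteq> 2" "d k x \<le> 2"
    using k xz dist_commute[of z x] kz \<open>far x z\<close>
      dist_triangle[of k a x] \<open>d a x = 1\<close> ab V unfolding far_def by auto
  then have kx: "d k x = 1"
    using dist_eq_1_or_3[of k x] dist_commute[of k x] k V by auto
  have "k \<noteq> y" "d y k \<noteq> 2" "d x y \<le> d x k + d k y"
    using k yz dist_commute[of z y] kz \<open>far y z\<close> dist_triangle[of x k y] V unfolding far_def
    by auto
  then have ky: "d k y = 3"
    using dist_eq_1_or_3[of k y] dist_commute[of k y] dist_commute[of x k] kx xy k V by auto
  have bk: "d b k = 2"
    using dist_triangle[of b a k] dist_triangle[of k b y] dist_commute[of b a]
      dist_commute[of k a] dist_commute[of k b] ky ab k V by simp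
  show ?thesis
    using ab bk kz k by blast
qed

end

section \<open>The diameter of the 2-distance graph\<close>

lemma diam3_graph_metric_gdist:
  assumes "simple_graph V E" "gdiam V E = 3"
  shows "diam3_graph_metric V (\<lambda>x y. the_enat (gdist V E x y))"
proof -
  define d where "d = (\<lambda>x y. the_enat (gdist V E x y))"
  have fin: "gdist V E x y = enat (d x y)" if "x \<in> V" "y \<in> V" for x y
    using gdist_finite[OF _ that, of E] assms(2) unfolding d_def
    by (cases "gdist V E x y") (auto simp: numeral_eq_enat)
  have sym: "E u v \<Longrightarrow> E v u" for u v
    using assms(1) unfolding simple_graph_def by blast
  have "diam3_graph_metric V d"
  proof unfold_locales
    fix x y assume "x \<in> V" "y \<in> V"
    then show "d x y = 0 \<longleftrightarrow> x = y"
      using fin[of x y] gdist_refl[of x V E] gdist_eq_0_imp_eq[of V E x y]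
      by (auto simp: zero_enat_def)
  next
    fix x y
    show "d x y = d y x"
      unfolding d_def using gdist_sym[OF sym, where V=V and x=x and y=y] by simp
  next
    fix x y z assume "x \<in> V" "y \<in> V" "z \<in> V"
    then show "d x z \<le> d x y + d y z"
      using gdist_triangle[of V E x z y] fin by simp
  next
    fix x y k assume "x \<in> V" "y \<in> V" "d x y = Suc k"
    then obtain z where z: "z \<in> V" "gdist V E x z = enat 1" "gdist V E z y = enat k"
      using gdist_split[of V E x y "Suc k" 1] fin by auto
    then have "d x z = 1" "d z y = k"
      unfolding d_def by simp_all
    with z(1) show "\<exists>z\<in>V. d x z = 1 \<and> d z y = k"
      by blast
  next
    fix x y assume "x \<in> V" "y \<in> V"
    then show "d x y \<le> 3"
      using gdist_le_gdiam[of x V y E] fin assms(2) by (simp add: numeral_eq_enat)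
  next
    obtain p q where "p \<in> V" "q \<in> V" "gdist V E p q = enat 3"
      using gdiam_attained[of V E 2] assms(2) by (auto simp: numeral_eq_enat)
    then show "\<exists>p\<in>V. \<exists>q\<in>V. d p q = 3"
      unfolding d_def by force
  qed
  then show ?thesis
    unfolding d_def .
qed

lemma D2_iff_dist:
  "gdiam V E \<noteq> \<infinity> \<Longrightarrow> D2 V E x y \<longleftrightarrow> x \<in> V \<and> y \<in> V \<and> the_enat (gdist V E x y) = 2"
  unfolding D2_def using gdist_finite[of V E x y]
  by (cases "gdist V E x y") (auto simp: numeral_eq_enat)

lemma gdiam_D2_ge_2:
  assumes "simple_graph V E" "gdiam V E = 3"
  shows "2 \<le> gdiam V (D2 V E)"
proof -
  interpret diam3_graph_metric V "\<lambda>x y. the_enat (gdist V E x y)"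
    using diam3_graph_metric_gdist[OF assms] .
  obtain p q where pq: "p \<in> V" "q \<in> V" "the_enat (gdist V E p q) = 3"
    using dist_eq_3_exists by blast
  then have "p \<noteq> q" "\<not> D2 V E p q"
    using dist_eq_0_iff[of p q] D2_iff_dist[of V E p q] assms(2) by auto
  then have "2 \<le> gdist V (D2 V E) p q"
    by (rule gdist_ge_2I)
  also have "\<dots> \<le> gdiam V (D2 V E)"
    using pq(1,2) by (rule gdist_le_gdiam)
  finally show ?thesis .
qed

lemma gdiam_D2_le_5:
  assumes "simple_graph V E" "gdiam V E = 3" "gconnected V (D2 V E)"
  shows "gdiam V (D2 V E) \<le> 5"
proof -
  interpret diam3_graph_metric V "\<lambda>x y. the_enat (gdist V E x y)"
    using diam3_graph_metric_gdist[OF assms(1,2)] .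
  let ?R = "D2 V E"
  have R_iff: "?R a b \<longleftrightarrow> a \<in> V \<and> b \<in> V \<and> the_enat (gdist V E a b) = 2" for a b
    using D2_iff_dist[of V E a b] assms(2) by (simp add: numeral_eq_enat)
  have far: "far a b" if "3 \<le> gdist V ?R a b" "a \<in> V" "b \<in> V" for a b
    using gdist_ge_3D[OF that] R_iff that(2,3) unfolding far_def by blast
  have "gdist V ?R x y \<le> 5" if xy: "x \<in> V" "y \<in> V" for x y
  proof (rule ccontr)
    assume far_xy: "\<not> gdist V ?R x y \<le> 5"
    have "gdist V ?R x y \<noteq> \<infinity>"
      using assms(3) xy unfolding gconnected_def by blast
    then obtain m where m: "gdist V ?R x y = enat m" "6 \<le> m"
      using far_xy by (cases "gdist V ?R x y") (auto simp: numeral_eq_enat)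
    obtain z where z: "z \<in> V" "gdist V ?R x z = enat 6"
      using gdist_split[OF m] by blast
    obtain u where u: "u \<in> V" "gdist V ?R x u = enat 3" "gdist V ?R u z = enat 3"
      using gdist_split[OF z(2), of 3] by auto
    have "far x u" "far u z" "far x z"
      using far u z xy by (auto simp: numeral_eq_enat)
    then obtain v w where "v \<in> V" "w \<in> V" "?R x v" "?R v w" "?R w z"
      using far_triple_D2_path[of x u z] R_iff xy u z by blast
    then have "gdist V ?R x z \<le> enat 3"
      using gdist_le_walk[of V ?R "[x, v, w, z]" x z] xy z by auto
    then show False
      using z by simp
  qed
  then show ?thesis
    unfolding gdiam_def by (blast intro: SUP_least)
qed

section \<open>Sharpness\<close>

definition distance_table :: "'a set \<Rightarrow> ('a \<Rightarrow> 'a \<Rightarrow> bool) \<Rightarrow> ('a \<Rightarrow> 'a \<Rightarrow> nat) \<Rightarrow> bool" where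
  "distance_table V R M \<longleftrightarrow> (\<forall>x\<in>V. M x x = 0 \<and> (\<forall>y\<in>V. M x y = 0 \<longrightarrow> y = x)
     \<and> (\<forall>u\<in>V. \<forall>v\<in>V. R u v \<longrightarrow> M x v \<le> M x u + 1)
     \<and> (\<forall>y\<in>V. 0 < M x y \<longrightarrow> (\<exists>u\<in>V. R u y \<and> M x y = Suc (M x u))))"

lemma gdist_distance_table:
  assumes M: "distance_table V R M" and "x \<in> V" "y \<in> V"
  shows "gdist V R x y = enat (M x y)"
proof (rule antisym)
  have "gdist V R x y \<le> enat n" if "y \<in> V" "M x y = n" for y n
    using that
  proof (induction n arbitrary: y)
    case 0
    then have "y = x"
      using M \<open>x \<in> V\<close> unfolding distance_table_def by blast
    then show ?case
      using gdist_refl[of x V R] \<open>x \<in> V\<close> by (simp add: zero_enat_def)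
  next
    case (Suc n)
    then obtain u where u: "u \<in> V" "R u y" "M x u = n"
      using M \<open>x \<in> V\<close> unfolding distance_table_def by force
    have "gdist V R x y \<le> gdist V R x u + gdist V R u y"
      by (rule gdist_triangle)
    also have "\<dots> \<le> enat n + 1"
      using Suc.IH[OF u(1,3)] gdist_le_1[where R=R, OF u(1) Suc.prems(1) u(2)] by (rule add_mono)
    finally show ?case
      by (simp add: eSuc_enat[symmetric] eSuc_plus_1)
  qed
  then show "gdist V R x y \<le> enat (M x y)"
    using \<open>y \<in> V\<close> by blast
next
  have Lipschitz: "\<forall>u\<in>V. \<forall>v\<in>V. R u v \<longrightarrow> M x v \<le> M x u + 1" and "M x x = 0"
    using M \<open>x \<in> V\<close> unfolding distance_table_def by auto
  show "enat (M x y) \<le> gdist V R x y"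
    unfolding gdist_def
  proof (rule INF_greatest)
    fix p assume "p \<in> {p. is_walk V R p x y}"
    then have "M x y \<le> M x x + (length p - 1)"
      using walk_Lipschitz[OF Lipschitz] by blast
    then show "enat (M x y) \<le> enat (length p - 1)"
      using \<open>M x x = 0\<close> by simp
  qed
qed

lemma gdiam_distance_table:
  assumes M: "distance_table V R M" and "\<forall>x\<in>V. \<forall>y\<in>V. M x y \<le> k"
    and "a \<in> V" "b \<in> V" "M a b = k"
  shows "gdiam V R = enat k"
proof (rule antisym)
  show "gdiam V R \<le> enat k"
    unfolding gdiam_def using assms gdist_distance_table[OF M] by (auto intro!: SUP_least)
  show "enat k \<le> gdiam V R"
    using gdist_le_gdiam[of a V b R] gdist_distance_table[OF M] assms by simp
qed

lemma gconnected_distance_table: "distance_table V R M \<Longrightarrow> V \<noteq> {} \<Longrightarrow> gconnected V R"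
  unfolding gconnected_def using gdist_distance_table by fastforce

lemma D2_distance_table:
  "distance_table V E M \<Longrightarrow> D2 V E = (\<lambda>u v. u \<in> V \<and> v \<in> V \<and> M u v = 2)"
  unfolding D2_def using gdist_distance_table[of V E M]
  by (intro ext) (auto simp: numeral_eq_enat)

definition graph_of_edges :: "('a \<times> 'a) list \<Rightarrow> 'a \<Rightarrow> 'a \<Rightarrow> bool" where
  "graph_of_edges es u v \<longleftrightarrow> (u, v) \<in> set es \<or> (v, u) \<in> set es"

lemma simple_graph_of_edges:
  "finite V \<Longrightarrow> \<forall>(u, v)\<in>set es. u \<noteq> v \<and> u \<in> V \<and> v \<in> V \<Longrightarrow> simple_graph V (graph_of_edges es)"
  unfolding simple_graph_def graph_of_edges_def by auto

lemma sharp_example: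
  assumes "finite V" "\<forall>(u, v)\<in>set es. u \<noteq> v \<and> u \<in> V \<and> v \<in> V"
    and M: "distance_table V (graph_of_edges es) M" "\<forall>x\<in>V. \<forall>y\<in>V. M x y \<le> 3"
      "a \<in> V" "b \<in> V" "M a b = 3"
    and N: "distance_table V (\<lambda>u v. u \<in> V \<and> v \<in> V \<and> M u v = 2) N" "\<forall>x\<in>V. \<forall>y\<in>V. N x y \<le> k"
      "a' \<in> V" "b' \<in> V" "N a' b' = k"
  shows "simple_graph V (graph_of_edges es) \<and> gdiam V (graph_of_edges es) = 3
    \<and> gconnected V (D2 V (graph_of_edges es)) \<and> gdiam V (D2 V (graph_of_edges es)) = enat k"
  using simple_graph_of_edges[OF assms(1,2)] gdiam_distance_table[OF M]
    gconnected_distance_table[OF N(1)] gdiam_distance_table[OF N] N(3)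
  unfolding D2_distance_table[OF M(1)] by (auto simp: numeral_eq_enat)

text \<open>Here \<open>D\<^sub>2(G)\<close> is the path 0 -- 1 -- 5 -- 2 -- 4 -- 3.\<close>

lemma sharp_example_5:
  "\<exists>(V :: nat set) E. simple_graph V E \<and> gdiam V E = 3 \<and> gconnected V (D2 V E)
     \<and> gdiam V (D2 V E) = 5"
proof -
  let ?V = "{0, 1, 2, 3, 4, 5 :: nat}"
  let ?es = "[(0,2), (0,3), (0,5), (1,2), (1,3), (1,4), (2,3), (3,5)] :: (nat \<times> nat) list"
  let ?M = "\<lambda>x y. [[0,2,1,1,3,1], [2,0,1,1,1,2], [1,1,0,1,2,2], [1,1,1,0,2,1], [3,1,2,2,0,3],
    [1,2,2,1,3,0 :: nat]] ! x ! y"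
  let ?N = "\<lambda>x y. [[0,1,3,5,4,2], [1,0,2,4,3,1], [3,2,0,2,1,1], [5,4,2,0,1,3], [4,3,1,1,0,2],
    [2,1,1,3,2,0 :: nat]] ! x ! y"
  have "distance_table ?V (graph_of_edges ?es) ?M"
    by (simp add: distance_table_def graph_of_edges_def)
  moreover have "distance_table ?V (\<lambda>u v. u \<in> ?V \<and> v \<in> ?V \<and> ?M u v = 2) ?N"
    by (simp add: distance_table_def)
  ultimately show ?thesis
    using sharp_example[of ?V ?es ?M 0 4 ?N 5 0 3] by (auto simp: numeral_eq_enat)
qed

lemma sharp_example_2:
  "\<exists>(V :: nat set) E. simple_graph V E \<and> gdiam V E = 3 \<and> gconnected V (D2 V E)
     \<and> gdiam V (D2 V E) = 2"
proof -
  let ?V = "{0, 1, 2, 3, 4, 5, 6 :: nat}"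
  let ?es = "[(0,4), (0,5), (0,6), (1,2), (1,3), (1,6), (2,5), (3,4)] :: (nat \<times> nat) list"
  let ?M = "\<lambda>x y. [[0,2,2,2,1,1,1], [2,0,1,1,2,2,1], [2,1,0,2,3,1,2], [2,1,2,0,1,3,2],
    [1,2,3,1,0,2,2], [1,2,1,3,2,0,2], [1,1,2,2,2,2,0 :: nat]] ! x ! y"
  let ?N = "\<lambda>x y. [[0,1,1,1,2,2,2], [1,0,2,2,1,1,2], [1,2,0,1,2,2,1], [1,2,1,0,2,2,1],
    [2,1,2,2,0,1,1], [2,1,2,2,1,0,1], [2,2,1,1,1,1,0 :: nat]] ! x ! y"
  have "distance_table ?V (graph_of_edges ?es) ?M"
    by (simp add: distance_table_def graph_of_edges_def)
  moreover have "distance_table ?V (\<lambda>u v. u \<in> ?V \<and> v \<in> ?V \<and> ?M u v = 2) ?N"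
    by (simp add: distance_table_def)
  ultimately show ?thesis
    using sharp_example[of ?V ?es ?M 2 4 ?N 2 0 4] by (auto simp: numeral_eq_enat)
qed

theorem corollary2p9:
  shows "(\<forall>(V :: 'a set) E. simple_graph V E \<and> gdiam V E = 3 \<and> gconnected V (D2 V E)
            \<longrightarrow> 2 \<le> gdiam V (D2 V E) \<and> gdiam V (D2 V E) \<le> 5)
       \<and> (\<exists>(V :: nat set) E. simple_graph V E \<and> gdiam V E = 3 \<and> gconnected V (D2 V E)
            \<and> gdiam V (D2 V E) = 2)
       \<and> (\<exists>(V :: nat set) E. simple_graph V E \<and> gdiam V E = 3 \<and> gconnected V (D2 V E)
            \<and> gdiam V (D2 V E) = 5)"
  using gdiam_D2_ge_2 gdiam_D2_le_5 sharp_example_2 sharp_example_5 by blast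

end
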